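(* Let $\omega_1$ and $\omega_2$ be symplectic forms on $\mathbb{R}^{2n}$ with matrix representations $\Omega_1$ and $\Omega_2$. Then $\omega_1$ and $\omega_2$ are $\omega_{\mathrm{std}}$-symplectomorphic only if there exists $\varphi \in \operatorname{Symp}(\mathbb{R}^{2n},\omega_{\mathrm{std}})$ such that for every $x \in \mathbb{R}^{2n}$, $\operatorname{Pf}(\Omega_1(\varphi(x))) = \operatorname{Pf}(\Omega_2(x))$ and $\operatorname{s}(\Omega_1(\varphi(x))) = \operatorname{s}(\Omega_2(x))$.
   Context: A 2-form on $\mathbb{R}^{2n}$ (coordinates $x_1,\dots,x_{2n}$) is $\omega = \sum_{i<j}\omega_{i,j}\,dx_i\wedge dx_j$ with functions $\omega_{i,j}:\mathbb{R}^{2n}\to\mathbb{R}$; its matrix representation $\Omega(x)$ is the skew-symmetric matrix with $\Omega(x)_{i,j} = \omega_{i,j}(x)$ for $i<j$. A symplectic form is a smooth, closed 2-form with $\det\Omega(x)\neq 0$ for all $x$. The standard symplectic form is $\omega_{\mathrm{std}} = \sum_{i=1}^n dx_{2i-1}\wedge dx_{2i}$. The pullback is $(\varphi^*\omega)(x)(v,w) = \omega(\varphi(x))(d\varphi_x v, d\varphi_x w)$. $\operatorname{Symp}(\mathbb{R}^{2n},\omega_{\mathrm{std}})$ is the set of diffeomorphisms $\varphi$ of $\mathbb{R}^{2n}$ with $\varphi^*\omega_{\mathrm{std}} = \omega_{\mathrm{std}}$. Symplectic forms $\omega_1,\omega_2$ are $\omega_{\mathrm{std}}$-symplectomorphic if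 there is $\varphi \in \operatorname{Symp}(\mathbb{R}^{2n},\omega_{\mathrm{std}})$ with $\varphi^*\omega_1 = \omega_2$. For a skew-symmetric $2n\times 2n$ matrix $A$, $\operatorname{Pf}(A) = \frac{1}{2^n n!}\sum_{\sigma\in S_{2n}}\operatorname{sgn}(\sigma)\prod_{i=1}^n A_{\sigma(2i-1),\sigma(2i)}$ (so that $\operatorname{Pf}(A)^2=\det A$), and the sum function is $\operatorname{s}(A) = \sum_{i=1}^n A_{2i-1,2i}$. *)

theory Defs
  imports "HOL-Analysis.Analysis"
begin

text \<open>Model of R^{2n}: coordinates are indexed by the finite type ('k \<times> bool), where
  n = CARD('k); the coordinate x_{2i-1} corresponds to index (k_i, False) and x_{2i}
  to (k_i, True) for an enumeration k_1,...,k_n of 'k.  Pairs (x_{2i-1}, x_{2i}) are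
  thus intrinsic, which is all that the standard form, the Pfaffian and the sum
  function depend on.\<close>

type_synonym 'k pt = "real ^ ('k \<times> bool)"
type_synonym 'k mat = "real ^ ('k \<times> bool) ^ ('k \<times> bool)"

coinductive smooth :: "('a::euclidean_space \<Rightarrow> 'b::real_normed_vector) \<Rightarrow> bool" where
  "f differentiable_on UNIV \<Longrightarrow>
   (\<forall>i\<in>Basis. smooth (\<lambda>x. frechet_derivative f (at x) i)) \<Longrightarrow> smooth f"

definition partial :: "('k::finite pt \<Rightarrow> real) \<Rightarrow> ('k \<times> bool) \<Rightarrow> 'k pt \<Rightarrow> real" where
  "partial f i x = frechet_derivative f (at x) (axis i 1)"

definition form_app :: "('k::finite pt \<Rightarrow> 'k mat) \<Rightarrow> 'k pt \<Rightarrow> 'k pt \<Rightarrow> 'k pt \<Rightarrow> real" where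
  "form_app \<Omega> x v w = v \<bullet> (\<Omega> x *v w)"

definition skew_field :: "('k::finite pt \<Rightarrow> 'k mat) \<Rightarrow> bool" where
  "skew_field \<Omega> \<longleftrightarrow> (\<forall>x. transpose (\<Omega> x) = - \<Omega> x)"

definition closed_form :: "('k::finite pt \<Rightarrow> 'k mat) \<Rightarrow> bool" where
  "closed_form \<Omega> \<longleftrightarrow> (\<forall>x i j k.
      partial (\<lambda>y. \<Omega> y $ j $ k) i x + partial (\<lambda>y. \<Omega> y $ k $ i) j x
      + partial (\<lambda>y. \<Omega> y $ i $ j) k x = 0)"

definition symplectic_form :: "('k::finite pt \<Rightarrow> 'k mat) \<Rightarrow> bool" where
  "symplectic_form \<Omega> \<longleftrightarrow> skew_field \<Omega> \<and> smooth \<Omega> \<and> closed_form \<Omega>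
     \<and> (\<forall>x. det (\<Omega> x) \<noteq> 0)"

definition omega_std :: "'k::finite pt \<Rightarrow> 'k mat" where
  "omega_std x = (\<chi> a b. if fst a = fst b \<and> \<not> snd a \<and> snd b then 1
                         else if fst a = fst b \<and> snd a \<and> \<not> snd b then -1 else 0)"

definition pullback :: "('k::finite pt \<Rightarrow> 'k pt) \<Rightarrow> ('k pt \<Rightarrow> 'k pt \<Rightarrow> 'k pt \<Rightarrow> real)
    \<Rightarrow> 'k pt \<Rightarrow> 'k pt \<Rightarrow> 'k pt \<Rightarrow> real" where
  "pullback \<phi> B x v w = B (\<phi> x) (frechet_derivative \<phi> (at x) v) (frechet_derivative \<phi> (at x) w)"

definition diffeomorphism :: "('a::euclidean_space \<Rightarrow> 'a) \<Rightarrow> bool" where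
  "diffeomorphism \<phi> \<longleftrightarrow> bij \<phi> \<and> smooth \<phi> \<and> smooth (inv \<phi>)"

definition Symp_std :: "('k::finite pt \<Rightarrow> 'k pt) set" where
  "Symp_std = {\<phi>. diffeomorphism \<phi> \<and>
      pullback \<phi> (form_app omega_std) = form_app omega_std}"

definition std_symplectomorphic :: "('k::finite pt \<Rightarrow> 'k mat) \<Rightarrow> ('k pt \<Rightarrow> 'k mat) \<Rightarrow> bool" where
  "std_symplectomorphic \<Omega>1 \<Omega>2 \<longleftrightarrow>
     (\<exists>\<phi>\<in>Symp_std. pullback \<phi> (form_app \<Omega>1) = form_app \<Omega>2)"

definition pfaffian :: "'k::finite mat \<Rightarrow> real" where
  "pfaffian A = (1 / (2 ^ CARD('k) * fact CARD('k))) *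
     (\<Sum>\<sigma>\<in>{\<sigma>. \<sigma> permutes (UNIV :: ('k \<times> bool) set)}.
        of_int (sign \<sigma>) * (\<Prod>k\<in>UNIV. A $ \<sigma> (k, False) $ \<sigma> (k, True)))"

definition sumfun :: "'k::finite mat \<Rightarrow> real" where
  "sumfun A = (\<Sum>k\<in>UNIV. A $ (k, False) $ (k, True))"

end

theory Submission
  imports Defs
begin

text \<open>At every point the pullback condition says that \<open>\<Omega>\<^sub>2(x) = M\<^sup>T \<Omega>\<^sub>1(\<phi> x) M\<close>, where
  \<open>M\<close> is the Jacobian matrix of \<open>\<phi>\<close> at \<open>x\<close>, and \<open>M\<close> is a symplectic matrix: \<open>M\<^sup>T J M = J\<close>
  for the constant matrix \<open>J\<close> of \<open>\<omega>\<^sub>s\<^sub>t\<^sub>d\<close>.  The Pfaffian transforms as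
  \<open>Pf(M\<^sup>T A M) = det M \<cdot> Pf A\<close>; applied to \<open>A = J\<close>, where \<open>Pf J > 0\<close>, this forces \<open>det M = 1\<close>.
  For skew \<open>A\<close> the sum function is \<open>s(A) = -tr(J A)/2\<close>, and \<open>J\<^sup>2 = -1\<close> turns \<open>M\<^sup>T J M = J\<close>
  into \<open>M J M\<^sup>T = J\<close>, so \<open>tr(J M\<^sup>T A M) = tr(M J M\<^sup>T A) = tr(J A)\<close>.\<close>

lemma sum_UNIV_prod_bool:
  fixes G :: "'k::finite \<times> bool \<Rightarrow> 'a::comm_monoid_add"
  shows "(\<Sum>a\<in>UNIV. G a) = (\<Sum>k\<in>UNIV. G (k, False) + G (k, True))"
proof -
  have "(\<Sum>a\<in>UNIV. G a) = (\<Sum>k\<in>UNIV. \<Sum>b\<in>UNIV. G (k, b))"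
    using sum.cartesian_product[of "\<lambda>k b. G (k, b)" UNIV UNIV]
    by (simp add: UNIV_Times_UNIV case_prod_beta')
  then show ?thesis
    by (simp add: UNIV_bool add.commute)
qed

lemma prod_UNIV_prod_bool:
  fixes G :: "'k::finite \<times> bool \<Rightarrow> 'a::comm_monoid_mult"
  shows "(\<Prod>a\<in>UNIV. G a) = (\<Prod>k\<in>UNIV. G (k, False) * G (k, True))"
proof -
  have "(\<Prod>a\<in>UNIV. G a) = (\<Prod>k\<in>UNIV. \<Prod>b\<in>UNIV. G (k, b))"
    using prod.cartesian_product[of "\<lambda>k b. G (k, b)" UNIV UNIV]
    by (simp add: UNIV_Times_UNIV case_prod_beta')
  then show ?thesis
    by (simp add: UNIV_bool mult.commute)
qed

lemma matrix_mul_uminus_left: "(- A) ** B = - (A ** B :: 'a::ring_1 ^ 'n ^ 'm)"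
  by (simp add: matrix_matrix_mult_def vec_eq_iff sum_negf)

lemma matrix_mul_uminus_right: "A ** (- B) = - (A ** B :: 'a::ring_1 ^ 'n ^ 'm)"
  by (simp add: matrix_matrix_mult_def vec_eq_iff sum_negf)

lemma matrix_congruence_entry:
  fixes A B :: "'a::comm_semiring_1 ^ 'n::finite ^ 'n"
  shows "(transpose B ** A ** B) $ a $ b =
    (\<Sum>h\<in>(UNIV :: (bool \<Rightarrow> 'n) set). B $ h False $ a * A $ h False $ h True * B $ h True $ b)"
proof -
  have "(transpose B ** A ** B) $ a $ b = (\<Sum>d\<in>UNIV. \<Sum>c\<in>UNIV. B $ c $ a * A $ c $ d * B $ d $ b)"
    by (simp add: matrix_matrix_mult_def transpose_def sum_distrib_right)
  also have "\<dots> = (\<Sum>(c, d)\<in>UNIV \<times> UNIV. B $ c $ a * A $ c $ d * B $ d $ b)"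
    by (subst sum.swap) (rule sum.cartesian_product)
  also have "\<dots> = (\<Sum>h\<in>UNIV. B $ h False $ a * A $ h False $ h True * B $ h True $ b)"
    by (rule sum.reindex_bij_witness[where i="\<lambda>h. (h False, h True)"
          and j="\<lambda>(c, d) b. if b then d else c"]) (force simp: fun_eq_iff)+
  finally show ?thesis .
qed

lemma det_reindex_rows:
  fixes B :: "'a::comm_ring_1 ^ 'n::finite ^ 'n"
  shows "det (\<chi> a. B $ f a) = (if f permutes UNIV then of_int (sign f) * det B else 0)"
proof (cases "f permutes UNIV")
  case True
  then show ?thesis by (simp add: det_permute_rows)
next
  case False
  then have "\<not> inj f"
    using bij_imp_permutes finite_UNIV_inj_surj by (metis bijI finite iso_tuple_UNIV_I)
  then obtain i j where ij: "f i = f j" "i \<noteq> j"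
    unfolding inj_def by blast
  have "det (\<chi> a. B $ f a) = 0"
    by (rule det_identical_rows[OF ij(2)]) (simp only: row_def vec_lambda_beta ij(1))
  with False show ?thesis by simp
qed

lemma symplectic_matrix_transpose:
  fixes M S :: "'a::field ^ 'n::finite ^ 'n"
  assumes S_square: "S ** S = - mat 1" and M: "transpose M ** S ** M = S"
  shows "M ** S ** transpose M = S"
proof -
  have S_neg_S: "S ** (- S) = mat 1" and neg_S_S: "(- S) ** S = mat 1"
    by (simp_all add: matrix_mul_uminus_left matrix_mul_uminus_right S_square)
  have "transpose M ** (S ** M ** (- S)) = mat 1"
    using M S_neg_S by (simp add: matrix_mul_assoc)
  then have "(S ** M ** (- S)) ** transpose M = mat 1"
    by (simp add: matrix_left_right_inverse)
  then have "(- S) ** ((S ** M ** (- S)) ** transpose M) = - S"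
    by (simp add: matrix_mul_rid)
  then have "M ** (- S) ** transpose M = - S"
    using neg_S_S by (metis matrix_mul_assoc matrix_mul_lid)
  then show ?thesis
    by (simp add: matrix_mul_uminus_left matrix_mul_uminus_right)
qed

text \<open>The Pfaffian of a congruence \<open>B\<^sup>T A B\<close>: after expanding each entry, a summand of the
  Pfaffian is indexed by a function \<open>f\<close> choosing the summation indices, and the
  sum over \<open>\<sigma>\<close> of the \<open>B\<close>-factors is the determinant of \<open>B\<close> with rows reindexed by \<open>f\<close>.\<close>

lemma pfaffian_term_congruence:
  fixes A B :: "'k::finite mat" and \<sigma> :: "'k \<times> bool \<Rightarrow> 'k \<times> bool"
  shows "(\<Prod>k\<in>UNIV. (transpose B ** A ** B) $ \<sigma> (k, False) $ \<sigma> (k, True)) =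
    (\<Sum>f\<in>UNIV. (\<Prod>k\<in>UNIV. A $ f (k, False) $ f (k, True)) * (\<Prod>a\<in>UNIV. B $ f a $ \<sigma> a))"
proof -
  let ?G = "\<lambda>k (h :: bool \<Rightarrow> 'k \<times> bool).
    B $ h False $ \<sigma> (k, False) * A $ h False $ h True * B $ h True $ \<sigma> (k, True)"
  have "(\<Prod>k\<in>UNIV. (transpose B ** A ** B) $ \<sigma> (k, False) $ \<sigma> (k, True)) =
      (\<Prod>k\<in>UNIV. \<Sum>h\<in>UNIV. ?G k h)"
    by (simp only: matrix_congruence_entry)
  also have "\<dots> = (\<Sum>g\<in>PiE UNIV (\<lambda>_. UNIV). \<Prod>k\<in>UNIV. ?G k (g k))"
    by (rule prod_sum_PiE) simp_all
  also have "\<dots> = (\<Sum>g\<in>UNIV. \<Prod>k\<in>UNIV. ?G k (g k))"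
    by (simp add: PiE_UNIV_domain)
  also have "\<dots> = (\<Sum>f\<in>UNIV. \<Prod>k\<in>UNIV. ?G k (\<lambda>b. f (k, b)))"
    by (rule sum.reindex_bij_witness[where i="\<lambda>f k b. f (k, b)" and j="\<lambda>g (k, b). g k b"]) auto
  also have "\<dots> = (\<Sum>f\<in>UNIV. (\<Prod>k\<in>UNIV. A $ f (k, False) $ f (k, True)) * (\<Prod>a\<in>UNIV. B $ f a $ \<sigma> a))"
    by (simp add: prod_UNIV_prod_bool[where G="\<lambda>a. B $ _ a $ \<sigma> a"] prod.distrib[symmetric] mult_ac)
  finally show ?thesis .
qed

lemma pfaffian_congruence:
  fixes A B :: "'k::finite mat"
  shows "pfaffian (transpose B ** A ** B) = det B * pfaffian A"
proof -
  let ?Perms = "{\<sigma>. \<sigma> permutes (UNIV :: ('k \<times> bool) set)}"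
  define \<alpha> where "\<alpha> f = (\<Prod>k\<in>UNIV. A $ f (k, False) $ f (k, True))" for f :: "'k \<times> bool \<Rightarrow> 'k \<times> bool"
  have "(\<Sum>\<sigma>\<in>?Perms. of_int (sign \<sigma>) *
          (\<Prod>k\<in>UNIV. (transpose B ** A ** B) $ \<sigma> (k, False) $ \<sigma> (k, True)))
      = (\<Sum>\<sigma>\<in>?Perms. \<Sum>f\<in>UNIV. \<alpha> f * (of_int (sign \<sigma>) * (\<Prod>a\<in>UNIV. B $ f a $ \<sigma> a)))"
    by (simp add: pfaffian_term_congruence \<alpha>_def sum_distrib_left mult_ac)
  also have "\<dots> = (\<Sum>f\<in>UNIV. \<alpha> f * det (\<chi> a. B $ f a))"
    by (subst sum.swap) (simp add: sum_distrib_left[symmetric] det_def)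
  also have "\<dots> = (\<Sum>f\<in>UNIV. if f permutes UNIV then det B * (of_int (sign f) * \<alpha> f) else 0)"
    by (rule sum.cong[OF refl]) (simp add: det_reindex_rows mult_ac)
  also have "\<dots> = det B * (\<Sum>\<sigma>\<in>?Perms. of_int (sign \<sigma>) * \<alpha> \<sigma>)"
    by (simp add: sum.inter_filter[symmetric] sum_distrib_left)
  finally show ?thesis
    by (simp add: pfaffian_def \<alpha>_def)
qed

definition perm_on_pairs :: "('k \<Rightarrow> 'k) \<Rightarrow> 'k \<times> bool \<Rightarrow> 'k \<times> bool" where
  "perm_on_pairs \<pi> = (\<lambda>(k, b). (\<pi> k, b))"

definition swap_pairs :: "'k set \<Rightarrow> 'k \<times> bool \<Rightarrow> 'k \<times> bool" where
  "swap_pairs K = (\<lambda>(k, b). (k, if k \<in> K then \<not> b else b))"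

lemma sign_perm_on_pairs:
  fixes \<pi> :: "'k::finite \<Rightarrow> 'k"
  assumes "\<pi> permutes UNIV"
  shows "permutation (perm_on_pairs \<pi>) \<and> sign (perm_on_pairs \<pi>) = 1"
  using assms finite
proof (induction rule: permutes_induct)
  case id
  have "perm_on_pairs (\<lambda>k :: 'k. k) = id"
    by (auto simp: perm_on_pairs_def)
  then show ?case
    by (simp add: permutation_id sign_id)
next
  case (swap a b p)
  let ?\<tau> = "Transposition.transpose (a, False) (b, False) \<circ> Transposition.transpose (a, True) (b, True)"
  have decomp: "perm_on_pairs (Transposition.transpose a b \<circ> p) = ?\<tau> \<circ> perm_on_pairs p"
    by (auto simp: perm_on_pairs_def fun_eq_iff Transposition.transpose_def)
  have \<tau>: "permutation ?\<tau>" "sign ?\<tau> = 1"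
    using swap.hyps(3) by (simp_all add: permutation_compose permutation_swap_id sign_compose sign_swap_id)
  with swap.IH show ?case
    unfolding decomp by (metis permutation_compose sign_compose mult_1_left)
qed

lemma sign_swap_pairs:
  fixes K :: "'k set"
  assumes "finite K"
  shows "permutation (swap_pairs K) \<and> sign (swap_pairs K) = (-1) ^ card K"
  using assms
proof (induction rule: finite_induct)
  case empty
  have "swap_pairs {} = (id :: 'k \<times> bool \<Rightarrow> _)"
    by (auto simp: swap_pairs_def)
  then show ?case
    by (simp add: permutation_id sign_id)
next
  case (insert k K)
  have decomp: "swap_pairs (insert k K) = Transposition.transpose (k, False) (k, True) \<circ> swap_pairs K"
    using insert.hyps(2) by (auto simp: swap_pairs_def fun_eq_iff Transposition.transpose_def)
  have perm: "permutation (swap_pairs K)"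
    using insert.IH by simp
  have "permutation (swap_pairs (insert k K))"
    unfolding decomp by (rule permutation_compose[OF permutation_swap_id perm])
  moreover have "sign (swap_pairs (insert k K)) = - sign (swap_pairs K)"
    unfolding decomp sign_compose[OF permutation_swap_id perm] by (simp add: sign_swap_id)
  ultimately show ?case
    using insert by simp
qed

text \<open>A permutation mapping every pair \<open>{(k, False), (k, True)}\<close> onto a pair is a
  permutation of the pairs followed by swaps inside the pairs listed in \<open>K\<close>.\<close>

lemma sign_pair_preserving_perm:
  fixes \<sigma> :: "'k::finite \<times> bool \<Rightarrow> 'k \<times> bool"
  assumes \<sigma>: "\<sigma> permutes UNIV"
    and pairs: "\<And>k. \<sigma> (k, True) = (fst (\<sigma> (k, False)), \<not> snd (\<sigma> (k, False)))"
  shows "sign \<sigma> = (-1) ^ card {k. snd (\<sigma> (k, False))}"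
proof -
  define K where "K = {k. snd (\<sigma> (k, False))}"
  define \<pi> where "\<pi> k = fst (\<sigma> (k, False))" for k
  have decomp: "\<sigma> \<circ> swap_pairs K = perm_on_pairs \<pi>"
  proof
    fix a :: "'k \<times> bool"
    obtain k b where a: "a = (k, b)" by (cases a)
    show "(\<sigma> \<circ> swap_pairs K) a = perm_on_pairs \<pi> a"
      using pairs[of k] unfolding a
      by (cases b; cases "k \<in> K"; simp add: swap_pairs_def perm_on_pairs_def \<pi>_def K_def;
          metis prod.collapse)
  qed
  have swap: "permutation (swap_pairs K)" "sign (swap_pairs K) = (-1) ^ card K"
    using sign_swap_pairs[of K] by auto
  have perm_\<sigma>: "permutation \<sigma>"
    using \<sigma> permutation_permutes finite by blast
  have "inj (perm_on_pairs \<pi>)"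
    using decomp swap(1) perm_\<sigma> by (metis inj_compose permutation_bijective bij_is_inj)
  then have "inj \<pi>"
    by (auto simp: inj_def perm_on_pairs_def)
  then have "\<pi> permutes UNIV"
    by (meson bijI bij_imp_permutes finite_UNIV_inj_surj finite iso_tuple_UNIV_I)
  then have "sign \<sigma> * (-1) ^ card K = 1"
    using decomp swap perm_\<sigma> sign_perm_on_pairs by (metis sign_compose)
  then have "sign \<sigma> * (-1) ^ card K * (-1) ^ card K = (-1) ^ card K"
    by simp
  then show ?thesis
    by (simp add: K_def mult.assoc power_mult_distrib[symmetric])
qed

lemma omega_std_entry:
  "omega_std x $ a $ b = (if b = (fst a, \<not> snd a) then (if snd a then -1 else 1) else 0)"
  by (cases a; cases b) (auto simp: omega_std_def)

lemma omega_std_const: "omega_std x = omega_std y"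
  by (simp add: omega_std_def)

lemma sum_omega_std_row:
  "(\<Sum>b\<in>UNIV. omega_std x $ a $ b * X b) = (if snd a then -1 else 1) * X (fst a, \<not> snd a)"
proof -
  have "(\<Sum>b\<in>UNIV. omega_std x $ a $ b * X b) =
      (\<Sum>b\<in>UNIV. if b = (fst a, \<not> snd a) then (if snd a then -1 else 1) * X b else 0)"
    by (rule sum.cong) (auto simp: omega_std_entry)
  then show ?thesis by simp
qed

lemma omega_std_square: "omega_std x ** omega_std x = - mat 1"
proof -
  have "(omega_std x ** omega_std x) $ a $ c =
      (if snd a then -1 else 1) * omega_std x $ (fst a, \<not> snd a) $ c" for a c
    unfolding matrix_matrix_mult_def vec_lambda_beta by (rule sum_omega_std_row)
  then show ?thesis
    by (simp add: vec_eq_iff omega_std_entry mat_def)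
qed

text \<open>Every summand of \<open>Pf J\<close> is \<open>0\<close> or \<open>1\<close>: a nonzero product forces \<open>\<sigma>\<close> to map pairs
  onto pairs, and then the sign of \<open>\<sigma>\<close> and the product are the same power of \<open>-1\<close>.\<close>

lemma pfaffian_omega_std_term_nonneg:
  fixes \<sigma> :: "'k::finite \<times> bool \<Rightarrow> 'k \<times> bool"
  assumes \<sigma>: "\<sigma> permutes UNIV"
  shows "0 \<le> of_int (sign \<sigma>) * (\<Prod>k\<in>UNIV. omega_std x $ \<sigma> (k, False) $ \<sigma> (k, True))"
proof (cases "\<exists>k. omega_std x $ \<sigma> (k, False) $ \<sigma> (k, True) = 0")
  case True
  then have "(\<Prod>k\<in>UNIV. omega_std x $ \<sigma> (k, False) $ \<sigma> (k, True)) = 0"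
    by (metis finite iso_tuple_UNIV_I prod_zero)
  then show ?thesis
    by (metis mult_zero_right order_refl)
next
  case False
  then have pairs: "\<sigma> (k, True) = (fst (\<sigma> (k, False)), \<not> snd (\<sigma> (k, False)))" for k
    by (metis omega_std_entry)
  define K where "K = {k. snd (\<sigma> (k, False))}"
  have "(\<Prod>k\<in>UNIV. omega_std x $ \<sigma> (k, False) $ \<sigma> (k, True)) = (\<Prod>k\<in>UNIV. if k \<in> K then -1 else 1)"
    using pairs by (intro prod.cong) (auto simp: omega_std_entry K_def)
  also have "\<dots> = (-1) ^ card K"
    by (simp add: prod.If_cases)
  finally show ?thesis
    using sign_pair_preserving_perm[OF \<sigma> pairs]
    by (simp add: K_def power_mult_distrib[symmetric])
qed

lemma pfaffian_omega_std_pos: "0 < pfaffian (omega_std x :: 'k::finite mat)"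
proof -
  let ?term = "\<lambda>\<sigma>. of_int (sign \<sigma>) * (\<Prod>k\<in>UNIV. omega_std x $ \<sigma> (k, False) $ \<sigma> (k, True))"
  have "1 = ?term id"
    by (simp add: sign_id omega_std_entry)
  also have "\<dots> \<le> (\<Sum>\<sigma>\<in>{\<sigma>. \<sigma> permutes (UNIV :: ('k \<times> bool) set)}. ?term \<sigma>)"
    by (rule member_le_sum) (auto simp: permutes_id[unfolded id_def] pfaffian_omega_std_term_nonneg)
  finally show ?thesis
    unfolding pfaffian_def by simp
qed

lemma det_symplectic_matrix:
  assumes "transpose M ** omega_std x ** M = omega_std x"
  shows "det M = 1"
  using pfaffian_congruence[of M "omega_std x"] pfaffian_omega_std_pos[of x] assms by simp

lemma sumfun_eq_trace:
  fixes A :: "'k::finite mat"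
  assumes skew: "transpose A = - A"
  shows "sumfun A = - trace (omega_std x ** A) / 2"
proof -
  have "A $ (k, True) $ (k, False) = - A $ (k, False) $ (k, True)" for k
    using arg_cong[OF skew, of "\<lambda>M. M $ (k, False) $ (k, True)"] by (simp add: transpose_def)
  then have "trace (omega_std x ** A) = (\<Sum>k\<in>UNIV. -2 * A $ (k, False) $ (k, True))"
    by (simp add: trace_def matrix_matrix_mult_def sum_omega_std_row sum_UNIV_prod_bool)
  then show ?thesis
    by (simp add: sumfun_def sum_negf flip: sum_distrib_left)
qed

lemma sumfun_symplectic_congruence:
  fixes A :: "'k::finite mat"
  assumes skew: "transpose A = - A" and M: "transpose M ** omega_std x ** M = omega_std x"
  shows "sumfun (transpose M ** A ** M) = sumfun A"
proof -
  have skew': "transpose (transpose M ** A ** M) = - (transpose M ** A ** M)"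
    using skew by (simp add: matrix_transpose_mul matrix_mul_assoc matrix_mul_uminus_left matrix_mul_uminus_right)
  have "trace (omega_std x ** (transpose M ** A ** M)) = trace (M ** omega_std x ** transpose M ** A)"
    by (metis matrix_mul_assoc trace_mul_sym)
  also have "\<dots> = trace (omega_std x ** A)"
    using symplectic_matrix_transpose[OF omega_std_square M] by simp
  finally show ?thesis
    using sumfun_eq_trace[OF skew, of x] sumfun_eq_trace[OF skew', of x] by simp
qed

lemma frechet_derivative_eq_matrix:
  fixes \<phi> :: "real ^ 'n::finite \<Rightarrow> real ^ 'n"
  assumes "smooth \<phi>"
  shows "frechet_derivative \<phi> (at x) v = matrix (frechet_derivative \<phi> (at x)) *v v"
proof -
  have "\<phi> differentiable (at x)"
    using assms by (cases rule: smooth.cases) (simp add: differentiable_on_def)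
  then have "linear (frechet_derivative \<phi> (at x))"
    using frechet_derivative_works has_derivative_linear by blast
  then show ?thesis
    by (simp add: linear_matrix_vector_mul_eq matrix_works)
qed

lemma inner_matrix_congruence:
  fixes M A :: "real ^ 'n::finite ^ 'n"
  shows "(M *v v) \<bullet> (A *v (M *v w)) = v \<bullet> ((transpose M ** A ** M) *v w)"
proof -
  have "v \<bullet> ((transpose M ** A ** M) *v w) = v \<bullet> (transpose M *v (A *v (M *v w)))"
    by (simp add: matrix_vector_mul_assoc matrix_mul_assoc)
  also have "\<dots> = ((A *v (M *v w)) v* M) \<bullet> v"
    by (simp add: transpose_matrix_vector inner_commute)
  also have "\<dots> = (A *v (M *v w)) \<bullet> (M *v v)"
    by (simp add: dot_lmul_matrix)
  also have "\<dots> = (M *v v) \<bullet> (A *v (M *v w))"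
    by (simp add: inner_commute)
  finally show ?thesis ..
qed

lemma pullback_form_app_eq_congruence:
  fixes \<phi> :: "'k::finite pt \<Rightarrow> 'k pt" and x :: "'k pt"
  assumes "smooth \<phi>" and "pullback \<phi> (form_app A) = form_app B"
  defines "M \<equiv> matrix (frechet_derivative \<phi> (at x))"
  shows "B x = transpose M ** A (\<phi> x) ** M"
proof -
  have "v \<bullet> (B x *v w) = v \<bullet> ((transpose M ** A (\<phi> x) ** M) *v w)" for v w
    using fun_cong[OF assms(2), of x] unfolding fun_eq_iff
    by (simp add: pullback_def form_app_def frechet_derivative_eq_matrix[OF assms(1)] M_def
        inner_matrix_congruence)
  then show ?thesis
    by (metis matrix_eq vector_eq_ldot)
qed

theorem theorem2p4:
  fixes \<Omega>1 \<Omega>2 :: "'k::finite pt \<Rightarrow> 'k mat"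
  assumes "symplectic_form \<Omega>1" and "symplectic_form \<Omega>2"
    and "std_symplectomorphic \<Omega>1 \<Omega>2"
  shows "\<exists>\<phi>\<in>Symp_std. \<forall>x. pfaffian (\<Omega>1 (\<phi> x)) = pfaffian (\<Omega>2 x)
                            \<and> sumfun (\<Omega>1 (\<phi> x)) = sumfun (\<Omega>2 x)"
proof -
  obtain \<phi> where \<phi>: "\<phi> \<in> Symp_std" and pullback_\<Omega>: "pullback \<phi> (form_app \<Omega>1) = form_app \<Omega>2"
    using assms(3) unfolding std_symplectomorphic_def by blast
  then have smooth: "smooth \<phi>" and pullback_std: "pullback \<phi> (form_app omega_std) = form_app omega_std"
    unfolding Symp_std_def diffeomorphism_def by auto
  have skew: "transpose (\<Omega>1 y) = - \<Omega>1 y" for y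
    using assms(1) by (simp add: symplectic_form_def skew_field_def)
  show ?thesis
  proof (intro bexI[OF _ \<phi>] allI conjI)
    fix x
    define M where "M = matrix (frechet_derivative \<phi> (at x))"
    have \<Omega>2: "\<Omega>2 x = transpose M ** \<Omega>1 (\<phi> x) ** M"
      using pullback_form_app_eq_congruence[OF smooth pullback_\<Omega>] M_def by simp
    have M: "transpose M ** omega_std x ** M = omega_std x"
      using pullback_form_app_eq_congruence[OF smooth pullback_std, of x] omega_std_const[of "\<phi> x" x]
      by (simp add: M_def)
    show "pfaffian (\<Omega>1 (\<phi> x)) = pfaffian (\<Omega>2 x)"
      by (simp add: \<Omega>2 pfaffian_congruence det_symplectic_matrix[OF M])
    show "sumfun (\<Omega>1 (\<phi> x)) = sumfun (\<Omega>2 x)"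
      by (simp add: \<Omega>2 sumfun_symplectic_congruence[OF skew M])
  qed
qed

end
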